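(* Let $C$ be a linear $[n,k,2]_q$ completely regular code with covering radius $\rho=1$, and let $n_a$ be the number of codewords at distance one from any vector not in $C$. Let $A$ be a generator matrix of the repetition $[n_a,1,n_a]_q$ code. (i) If $k=n-1$, then $C$ is linearly equivalent to the code with parity-check matrix $H=A$. (ii) If $k<n-1$, then $C$ is linearly equivalent to the code with parity-check matrix $H=A\otimes B$, where $B$ is a parity-check matrix of a $q$-ary Hamming code of length $n_b=n/n_a$ (in particular such a Hamming code exists).
   Context: $\mathbb{F}_q$ is the finite field with $q$ elements; Hamming distance; covering radius $\rho=\max_{\bf v}\min_{{\bf x}\in C}d({\bf v},{\bf x})$. $C$ is completely regular if for every vector ${\bf x}$, with $t=d({\bf x},C)$, the number of codewords at distance $i$ from ${\bf x}$ depends only on $t$ and $i$ (so $n_a$ is well defined). The repetition $[n,1,n]_q$ code is $\{(c,\dots,c)\}$. For $m\ge 2$ a $q$-ary Hamming code of length $(q^m-1)/(q-1)$ is a linear code with an $m\times (q^m-1)/(q-1)$ parity-check matrix whose columns are nonzero and pairwise linearly independent. Two codes are linearly equivalent if one is the image of the other under ${\bf x}\mapsto{\bf x}M$ for a monomial matrix $M$. $A\otimes B$ denotes the Kronecker product (each entry $a_{r,s}$ of $A$ replaced by the block $a_{r,s}B$). *)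

theory Defs
  imports "HOL-Combinatorics.Permutations"
begin

text \<open>Vectors of length n over a finite field 'a are functions nat => 'a vanishing
  outside {0..<n}. Matrices are functions nat => nat => 'a (row, column), with their
  dimensions given explicitly.\<close>

definition vecs :: "nat \<Rightarrow> (nat \<Rightarrow> 'a::zero) set" where
  "vecs n = {x. \<forall>i\<ge>n. x i = 0}"

definition hdist :: "nat \<Rightarrow> (nat \<Rightarrow> 'a) \<Rightarrow> (nat \<Rightarrow> 'a) \<Rightarrow> nat" where
  "hdist n x y = card {i. i < n \<and> x i \<noteq> y i}"

definition linear_code :: "nat \<Rightarrow> (nat \<Rightarrow> 'a::field) set \<Rightarrow> bool" where
  "linear_code n C \<longleftrightarrow> C \<subseteq> vecs n \<and> (\<lambda>_. 0) \<in> C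
     \<and> (\<forall>x\<in>C. \<forall>y\<in>C. (\<lambda>i. x i + y i) \<in> C)
     \<and> (\<forall>a. \<forall>x\<in>C. (\<lambda>i. a * x i) \<in> C)"

definition code_dim :: "(nat \<Rightarrow> 'a::{field,finite}) set \<Rightarrow> nat \<Rightarrow> bool" where
  "code_dim C k \<longleftrightarrow> card C = card (UNIV :: 'a set) ^ k"

definition min_dist :: "nat \<Rightarrow> (nat \<Rightarrow> 'a) set \<Rightarrow> nat \<Rightarrow> bool" where
  "min_dist n C d \<longleftrightarrow> (\<exists>x\<in>C. \<exists>y\<in>C. x \<noteq> y \<and> hdist n x y = d)
     \<and> (\<forall>x\<in>C. \<forall>y\<in>C. x \<noteq> y \<longrightarrow> d \<le> hdist n x y)"

definition dist_to_code :: "nat \<Rightarrow> (nat \<Rightarrow> 'a) set \<Rightarrow> (nat \<Rightarrow> 'a) \<Rightarrow> nat" where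
  "dist_to_code n C v = Min ((\<lambda>c. hdist n v c) ` C)"

definition covering_radius :: "nat \<Rightarrow> (nat \<Rightarrow> 'a::zero) set \<Rightarrow> nat" where
  "covering_radius n C = Max ((\<lambda>v. dist_to_code n C v) ` vecs n)"

definition completely_regular :: "nat \<Rightarrow> (nat \<Rightarrow> 'a::zero) set \<Rightarrow> bool" where
  "completely_regular n C \<longleftrightarrow>
     (\<forall>x\<in>vecs n. \<forall>y\<in>vecs n. dist_to_code n C x = dist_to_code n C y \<longrightarrow>
        (\<forall>i. card {c\<in>C. hdist n x c = i} = card {c\<in>C. hdist n y c = i}))"

definition ker_code :: "nat \<Rightarrow> nat \<Rightarrow> (nat \<Rightarrow> nat \<Rightarrow> 'a::comm_ring) \<Rightarrow> (nat \<Rightarrow> 'a) set" where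
  "ker_code m n H = {x \<in> vecs n. \<forall>r<m. (\<Sum>j<n. H r j * x j) = 0}"

definition row_space :: "nat \<Rightarrow> nat \<Rightarrow> (nat \<Rightarrow> nat \<Rightarrow> 'a::comm_ring) \<Rightarrow> (nat \<Rightarrow> 'a) set" where
  "row_space k n G = {x. \<exists>u. x = (\<lambda>j. if j < n then (\<Sum>r<k. u r * G r j) else 0)}"

text \<open>G is a (k x n) generator matrix of the [n,k] code C: its rows span C and are
  linearly independent (equivalently, the row space has q^k elements).\<close>
definition generator_matrix ::
  "nat \<Rightarrow> nat \<Rightarrow> (nat \<Rightarrow> nat \<Rightarrow> 'a::{field,finite}) \<Rightarrow> (nat \<Rightarrow> 'a) set \<Rightarrow> bool" where
  "generator_matrix k n G C \<longleftrightarrow> row_space k n G = C \<and> card C = card (UNIV :: 'a set) ^ k"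

definition rep_code :: "nat \<Rightarrow> (nat \<Rightarrow> 'a::zero) set" where
  "rep_code n = {x \<in> vecs n. \<exists>c. \<forall>j<n. x j = c}"

definition hamming_length :: "nat \<Rightarrow> nat \<Rightarrow> nat" where
  "hamming_length q m = (q ^ m - 1) div (q - 1)"

definition hamming_pcm :: "nat \<Rightarrow> (nat \<Rightarrow> nat \<Rightarrow> 'a::{field,finite}) \<Rightarrow> bool" where
  "hamming_pcm m B \<longleftrightarrow> 2 \<le> m \<and>
     (\<forall>j < hamming_length (card (UNIV :: 'a set)) m. \<exists>i<m. B i j \<noteq> 0) \<and>
     (\<forall>j < hamming_length (card (UNIV :: 'a set)) m. \<forall>j' < hamming_length (card (UNIV :: 'a set)) m. j \<noteq> j' \<longrightarrow>
        \<not> (\<exists>a. \<forall>i<m. B i j' = a * B i j))"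

definition kron :: "nat \<Rightarrow> nat \<Rightarrow> (nat \<Rightarrow> nat \<Rightarrow> 'a::times) \<Rightarrow> (nat \<Rightarrow> nat \<Rightarrow> 'a) \<Rightarrow> nat \<Rightarrow> nat \<Rightarrow> 'a" where
  "kron r2 c2 A B i j = A (i div r2) (j div c2) * B (i mod r2) (j mod c2)"

definition monomial_matrix :: "nat \<Rightarrow> (nat \<Rightarrow> nat \<Rightarrow> 'a::zero) \<Rightarrow> bool" where
  "monomial_matrix n M \<longleftrightarrow> (\<exists>\<sigma> d. \<sigma> permutes {..<n} \<and> (\<forall>i<n. d i \<noteq> 0) \<and>
     (\<forall>i<n. \<forall>j<n. M i j = (if j = \<sigma> i then d i else 0)))"

definition vec_mat_mult :: "nat \<Rightarrow> (nat \<Rightarrow> 'a::comm_ring) \<Rightarrow> (nat \<Rightarrow> nat \<Rightarrow> 'a) \<Rightarrow> nat \<Rightarrow> 'a" where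
  "vec_mat_mult n x M = (\<lambda>j. if j < n then (\<Sum>i<n. x i * M i j) else 0)"

definition lin_equiv :: "nat \<Rightarrow> (nat \<Rightarrow> 'a::comm_ring) set \<Rightarrow> (nat \<Rightarrow> 'a) set \<Rightarrow> bool" where
  "lin_equiv n C D \<longleftrightarrow> (\<exists>M. monomial_matrix n M \<and> D = (\<lambda>x. vec_mat_mult n x M) ` C)"

end

theory Submission
  imports Defs "HOL-Library.Function_Algebras" "HOL.Vector_Spaces"
begin

text \<open>Let H be a parity-check matrix of C, with r = n - k rows and columns F 0, ..., F (n-1).
  Minimum distance 2 makes every column nonzero. A vector v outside C with syndrome s has as
  codewords at distance one exactly the vectors v - a e_i with a F i = s, so every nonzero
  s \<in> F_q^r is a nonzero multiple of exactly na columns: each point of the projective space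
  PG(r-1, q) occurs na times among the columns of H, and counting gives n (q - 1) = (q^r - 1) na.
  The matrices A (for r = 1) and A \<otimes> B with B a Hamming parity-check matrix (for r \<ge> 2) have the
  same column statistics, and parity-check matrices whose columns represent the same projective
  points equally often differ by a monomial matrix.\<close>

subsection \<open>The space of vectors of length n\<close>

text \<open>With the pointwise addition from Function_Algebras this makes nat \<Rightarrow> 'a a vector space over 'a.\<close>
definition vscale :: "'a::field \<Rightarrow> (nat \<Rightarrow> 'a) \<Rightarrow> nat \<Rightarrow> 'a" where
  "vscale a x = (\<lambda>i. a * x i)"

lemma vscale_apply: "vscale a x i = a * x i"
  by (simp add: vscale_def)

interpretation V: vector_space "vscale :: 'a::field \<Rightarrow> _"
  by unfold_locales (auto simp: vscale_def fun_eq_iff algebra_simps)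

interpretation VP: vector_space_pair "vscale :: 'a::field \<Rightarrow> _" "vscale :: 'a::field \<Rightarrow> _"
  by unfold_locales

lemma sum_fun_apply: "(\<Sum>i\<in>I. f i) x = (\<Sum>i\<in>I. f i x)"
  by (induction I rule: infinite_finite_induct) auto

lemma card_UNIV_field_ge_2: "2 \<le> card (UNIV :: 'a::{field,finite} set)"
proof -
  have "card {0::'a, 1} \<le> card (UNIV :: 'a set)"
    by (intro card_mono) auto
  then show ?thesis by simp
qed

lemma vecs_restrict_bij:
  "bij_betw (\<lambda>g i. if i < n then g i else (0::'a::zero)) (PiE {..<n} (\<lambda>_. UNIV)) (vecs n)"
  (is "bij_betw ?h _ _")
proof (rule bij_betwI')
  fix x y :: "nat \<Rightarrow> 'a" assume "x \<in> PiE {..<n} (\<lambda>_. UNIV)" "y \<in> PiE {..<n} (\<lambda>_. UNIV)"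
  then show "(?h x = ?h y) = (x = y)"
    by (auto simp: fun_eq_iff PiE_def extensional_def) metis
next
  fix y :: "nat \<Rightarrow> 'a" assume "y \<in> vecs n"
  then show "\<exists>x\<in>PiE {..<n} (\<lambda>_. UNIV). y = ?h x"
    by (intro bexI[of _ "restrict y {..<n}"]) (auto simp: fun_eq_iff vecs_def)
qed (auto simp: vecs_def)

lemma finite_vecs: "finite (vecs n :: (nat \<Rightarrow> 'a::{zero,finite}) set)"
  using bij_betw_finite[OF vecs_restrict_bij[where 'a='a]] by (simp add: finite_PiE)

lemma card_vecs: "card (vecs n :: (nat \<Rightarrow> 'a::{zero,finite}) set) = card (UNIV :: 'a set) ^ n"
  using bij_betw_same_card[OF vecs_restrict_bij[where 'a='a]] by (simp add: card_PiE)

lemma card_nonzero_vecs: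
  "card (vecs m - {0 :: nat \<Rightarrow> 'a::{zero,finite}}) = card (UNIV :: 'a set) ^ m - 1"
proof -
  have "(0 :: nat \<Rightarrow> 'a) \<in> vecs m" by (simp add: vecs_def)
  then show ?thesis by (simp add: card_Diff_singleton finite_vecs card_vecs)
qed

lemma subspace_vecs: "V.subspace (vecs n)"
  by (auto simp: V.subspace_def vecs_def vscale_apply)

lemma vscale_in_vecs: "x \<in> vecs n \<Longrightarrow> vscale a x \<in> vecs n"
  by (simp add: vecs_def vscale_apply)

lemma linear_code_subspace: "linear_code n C \<Longrightarrow> V.subspace C"
  unfolding linear_code_def V.subspace_def by (auto simp: vscale_def plus_fun_def zero_fun_def)

lemma card_span_independent:
  fixes S :: "(nat \<Rightarrow> 'a::{field,finite}) set"
  assumes "finite S" "V.independent S"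
  shows "card (V.span S) = card (UNIV :: 'a set) ^ card S"
  using assms
proof (induction S rule: finite_induct)
  case empty
  then show ?case by simp
next
  case (insert x S)
  have x: "x \<notin> V.span S" and S: "V.independent S"
    using insert(2,4) by (simp_all add: V.independent_insert)
  let ?h = "\<lambda>(a::'a, y). vscale a x + y"
  have "bij_betw ?h (UNIV \<times> V.span S) (V.span (insert x S))"
  proof (rule bij_betwI')
    fix p p' :: "'a \<times> (nat \<Rightarrow> 'a)"
    assume p: "p \<in> UNIV \<times> V.span S" "p' \<in> UNIV \<times> V.span S"
    obtain a y a' y' where pp: "p = (a, y)" "p' = (a', y')" by (cases p, cases p')
    show "(?h p = ?h p') = (p = p')"
    proof
      assume e: "?h p = ?h p'"
      have "vscale (a - a') x = y' - y"
        using e pp by (auto simp: fun_eq_iff algebra_simps vscale_apply)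
      moreover have "y' - y \<in> V.span S" using p pp by (auto intro: V.span_diff)
      ultimately have "a = a'"
        using x V.span_scale[of _ S "inverse (a - a')"] by (metis V.scale_left_imp_eq V.scale_one
            V.scale_scale left_inverse right_minus_eq)
      then show "p = p'" using e pp by auto
    qed auto
  next
    fix p :: "'a \<times> (nat \<Rightarrow> 'a)" assume "p \<in> UNIV \<times> V.span S"
    then show "?h p \<in> V.span (insert x S)"
      by (auto intro: V.span_add V.span_scale V.span_base V.span_mono[THEN subsetD, of S])
  next
    fix z assume "z \<in> V.span (insert x S)"
    then obtain k where "z - vscale k x \<in> V.span S" by (auto simp: V.span_insert)
    then show "\<exists>p\<in>UNIV \<times> V.span S. z = ?h p"
      by (intro bexI[of _ "(k, z - vscale k x)"]) auto
  qed
  then have "card (V.span (insert x S)) = card (UNIV :: 'a set) * card (V.span S)"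
    by (metis bij_betw_same_card card_cartesian_product)
  then show ?case using insert S by simp
qed

subsection \<open>Syndromes\<close>

definition unit_vec :: "nat \<Rightarrow> nat \<Rightarrow> 'a::zero_neq_one" where
  "unit_vec i = (\<lambda>j. if j = i then 1 else 0)"

lemma unit_vec_in_vecs: "i < n \<Longrightarrow> unit_vec i \<in> vecs n"
  by (simp add: unit_vec_def vecs_def)

lemma sum_unit_vec:
  fixes x :: "nat \<Rightarrow> 'a::field"
  assumes "x \<in> vecs n"
  shows "(\<Sum>i<n. vscale (x i) (unit_vec i)) = x"
proof
  fix j
  have "(\<Sum>i<n. vscale (x i) (unit_vec i)) j = (\<Sum>i<n. if j = i then x i else 0)"
    by (simp add: sum_fun_apply vscale_apply unit_vec_def if_distrib cong: if_cong)
  also have "\<dots> = x j" using assms by (auto simp: vecs_def)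
  finally show "(\<Sum>i<n. vscale (x i) (unit_vec i)) j = x j" .
qed

text \<open>F j is the j-th column of a parity-check matrix.\<close>
definition syndrome :: "nat \<Rightarrow> (nat \<Rightarrow> nat \<Rightarrow> 'a::field) \<Rightarrow> (nat \<Rightarrow> 'a) \<Rightarrow> nat \<Rightarrow> 'a" where
  "syndrome n F x = (\<Sum>j<n. vscale (x j) (F j))"

definition syndrome_code :: "nat \<Rightarrow> (nat \<Rightarrow> nat \<Rightarrow> 'a::field) \<Rightarrow> (nat \<Rightarrow> 'a) set" where
  "syndrome_code n F = {x \<in> vecs n. syndrome n F x = 0}"

lemma linear_syndrome: "Vector_Spaces.linear vscale vscale (syndrome n F)"
  unfolding Vector_Spaces.linear_iff
  by (simp add: V.vector_space_axioms syndrome_def V.scale_left_distrib sum.distrib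
      V.scale_sum_right vscale_apply)

lemma syndrome_unit_vec: "i < n \<Longrightarrow> syndrome n F (unit_vec i) = F i"
  by (simp add: syndrome_def unit_vec_def if_distrib[of "\<lambda>a. vscale a _"] cong: if_cong)

lemma syndrome_eq_linear_map:
  assumes L: "Vector_Spaces.linear vscale vscale L" and x: "x \<in> vecs n"
  shows "syndrome n (\<lambda>i. L (unit_vec i)) x = L x"
proof -
  have "syndrome n (\<lambda>i. L (unit_vec i)) x = L (\<Sum>i<n. vscale (x i) (unit_vec i))"
    by (simp add: syndrome_def VP.linear_sum[OF L] VP.linear_scale[OF L])
  then show ?thesis using sum_unit_vec[OF x] by simp
qed

subsection \<open>Every linear code is the kernel of a surjective syndrome map\<close>

lemma card_subspace_eq_card_kernel_mult_card_image:
  fixes L :: "(nat \<Rightarrow> 'a::{field,finite}) \<Rightarrow> (nat \<Rightarrow> 'a)"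
  assumes L: "Vector_Spaces.linear vscale vscale L" and U: "V.subspace U" "finite U"
  shows "card U = card {x\<in>U. L x = 0} * card (L ` U)"
proof -
  let ?K = "{x\<in>U. L x = 0}"
  have "card U = card (\<Union>y\<in>L ` U. {x\<in>U. L x = y})"
    by (rule arg_cong[where f = card]) auto
  also have "\<dots> = (\<Sum>y\<in>L ` U. card {x\<in>U. L x = y})"
    by (rule card_UN_disjoint) (use U in auto)
  also have "\<dots> = (\<Sum>y\<in>L ` U. card ?K)"
  proof (rule sum.cong)
    fix y assume "y \<in> L ` U"
    then obtain x0 where x0: "x0 \<in> U" "L x0 = y" by auto
    have "bij_betw (\<lambda>z. z + x0) ?K {x\<in>U. L x = y}"
    proof (rule bij_betwI')
      fix x assume "x \<in> {x\<in>U. L x = y}"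
      then show "\<exists>z\<in>?K. x = z + x0"
        using x0 U VP.linear_diff[OF L] by (intro bexI[of _ "x - x0"]) (auto intro: V.subspace_diff)
    qed (use x0 U VP.linear_add[OF L] in \<open>auto intro: V.subspace_add\<close>)
    then show "card {x\<in>U. L x = y} = card ?K" by (simp add: bij_betw_same_card)
  qed simp
  finally show ?thesis by simp
qed

lemma linear_code_basis_extension:
  fixes C :: "(nat \<Rightarrow> 'a::{field,finite}) set"
  assumes lin: "linear_code n C" and dim: "code_dim C k"
  obtains Bc Bv where "Bc \<subseteq> Bv" "V.independent Bv" "finite Bv" "V.span Bc = C"
    "V.span Bv = vecs n" "card Bc = k" "card Bv = n"
proof -
  let ?q = "card (UNIV :: 'a set)"
  have q: "2 \<le> ?q" by (rule card_UNIV_field_ge_2)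
  have Cv: "C \<subseteq> vecs n" using lin by (simp add: linear_code_def)
  obtain Bc where Bc: "Bc \<subseteq> C" "V.independent Bc" "C \<subseteq> V.span Bc"
    by (rule V.basis_exists[of C])
  obtain Bv where Bv: "Bc \<subseteq> Bv" "Bv \<subseteq> vecs n" "V.independent Bv" "vecs n \<subseteq> V.span Bv"
    by (rule V.maximal_independent_subset_extend[of Bc "vecs n"]) (use Bc Cv in auto)
  have fin: "finite Bv" "finite Bc"
    using Bv finite_vecs finite_subset by (metis, metis)
  have span: "V.span Bc = C" "V.span Bv = vecs n"
    using V.span_subspace[OF Bc(1,3) linear_code_subspace[OF lin]]
      V.span_subspace[OF Bv(2,4) subspace_vecs] by simp_all
  have "?q ^ card Bc = ?q ^ k"
    using card_span_independent[OF fin(2) Bc(2)] span dim by (simp add: code_dim_def)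
  moreover have "?q ^ card Bv = ?q ^ n"
    using card_span_independent[OF fin(1) Bv(3)] span by (simp add: card_vecs)
  ultimately have "card Bc = k" "card Bv = n" using q by simp_all
  with Bv(1,3) fin(1) span show thesis by (rule that)
qed

lemma linear_map_onto_vecs_vanishing:
  fixes Bc Bv :: "(nat \<Rightarrow> 'a::field) set"
  assumes "Bc \<subseteq> Bv" "V.independent Bv" "finite Bv" "card (Bv - Bc) = m"
  obtains L where "Vector_Spaces.linear vscale vscale L" "\<And>x. L x \<in> vecs m"
    "vecs m \<subseteq> L ` V.span Bv" "\<And>x. x \<in> V.span Bc \<Longrightarrow> L x = 0"
proof -
  obtain w where w: "bij_betw w (Bv - Bc) {..<m}"
    using ex_bij_betw_finite_nat[of "Bv - Bc"] assms(3,4) by (metis atLeast0LessThan finite_Diff)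
  define L where "L = VP.construct Bv (\<lambda>b. if b \<in> Bc then 0 else unit_vec (w b))"
  have wm: "w b < m" if "b \<in> Bv" "b \<notin> Bc" for b
    using bij_betwE[OF w] that by blast
  have lin: "Vector_Spaces.linear vscale vscale L"
    unfolding L_def by (rule VP.linear_construct[OF assms(2)])
  have basis: "L b = (if b \<in> Bc then 0 else unit_vec (w b))" if "b \<in> Bv" for b
    unfolding L_def using VP.construct_basis[OF assms(2) that] by simp
  have "L x \<in> V.span ((\<lambda>b. if b \<in> Bc then 0 else unit_vec (w b)) ` Bv)" for x
    unfolding L_def by (rule VP.construct_in_span[OF assms(2)])
  moreover have "V.span ((\<lambda>b. if b \<in> Bc then 0 else unit_vec (w b)) ` Bv) \<subseteq> vecs m"
    using wm unit_vec_in_vecs subspace_vecs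
    by (intro V.span_minimal) (auto simp: vecs_def)
  ultimately have range: "L x \<in> vecs m" for x by blast
  have onto: "y \<in> L ` V.span Bv" if y: "y \<in> vecs m" for y
  proof -
    have "L (\<Sum>b\<in>Bv - Bc. vscale (y (w b)) b) = (\<Sum>b\<in>Bv - Bc. vscale (y (w b)) (unit_vec (w b)))"
      by (simp add: VP.linear_sum[OF lin] VP.linear_scale[OF lin] basis)
    also have "\<dots> = (\<Sum>i<m. vscale (y i) (unit_vec i))"
      using sum.reindex_bij_betw[OF w, of "\<lambda>i. vscale (y i) (unit_vec i)"] by simp
    also have "\<dots> = y" using sum_unit_vec[OF y] .
    finally show ?thesis
      by (metis (no_types, lifting) Diff_subset V.span_base V.span_scale V.span_sum image_eqI subsetD)
  qed
  have "L x = 0" if "x \<in> V.span Bc" for x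
    by (rule VP.linear_eq_on[OF lin VP.linear_zero that, simplified]) (use basis assms(1) in auto)
  then show thesis using that lin range onto by blast
qed

lemma linear_code_eq_syndrome_code:
  fixes C :: "(nat \<Rightarrow> 'a::{field,finite}) set"
  assumes lin: "linear_code n C" and dim: "code_dim C k"
  obtains F where "\<And>i. i < n \<Longrightarrow> F i \<in> vecs (n - k)" "C = syndrome_code n F"
    "syndrome n F ` vecs n = vecs (n - k)"
proof -
  let ?q = "card (UNIV :: 'a set)"
  obtain Bc Bv where B: "Bc \<subseteq> Bv" "V.independent Bv" "finite Bv" "V.span Bc = C"
    "V.span Bv = vecs n" "card Bc = k" "card Bv = n"
    using linear_code_basis_extension[OF lin dim] by blast
  have "card (Bv - Bc) = n - k" using B by (simp add: card_Diff_subset finite_subset)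
  then obtain L where L: "Vector_Spaces.linear vscale vscale L" "\<And>x. L x \<in> vecs (n - k)"
    "vecs (n - k) \<subseteq> L ` vecs n" "\<And>x. x \<in> C \<Longrightarrow> L x = 0"
    using linear_map_onto_vecs_vanishing[OF B(1-3)] B(4,5) by metis
  define F where "F i = L (unit_vec i)" for i
  have syn: "syndrome n F x = L x" if "x \<in> vecs n" for x
    unfolding F_def using syndrome_eq_linear_map[OF L(1) that] .
  let ?K = "{x \<in> vecs n. L x = 0}"
  have image: "L ` vecs n = vecs (n - k)" using L(2,3) by blast
  have "?q ^ n = card ?K * ?q ^ (n - k)"
    using card_subspace_eq_card_kernel_mult_card_image[OF L(1) subspace_vecs finite_vecs] image
    by (simp add: card_vecs)
  moreover have "k \<le> n" using B card_mono by metis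
  ultimately have "?q ^ k * ?q ^ (n - k) = card ?K * ?q ^ (n - k)"
    by (simp add: power_add[symmetric])
  then have "card C = card ?K"
    using dim card_UNIV_field_ge_2[where 'a='a] by (simp add: code_dim_def)
  moreover have "C \<subseteq> ?K" using L(4) lin by (auto simp: linear_code_def)
  moreover have "finite ?K" using finite_vecs[where 'a='a] by simp
  ultimately have "C = ?K" by (metis card_subset_eq)
  then have "C = syndrome_code n F" using syn by (auto simp: syndrome_code_def)
  moreover have "syndrome n F ` vecs n = vecs (n - k)"
    using syn image by (metis (no_types, lifting) image_cong)
  moreover have "F i \<in> vecs (n - k)" for i using L(2) by (simp add: F_def)
  ultimately show thesis by (intro that[of F])
qed

subsection \<open>Monomially equivalent parity-check matrices\<close>

lemma vec_mat_mult_monomial: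
  assumes \<sigma>: "\<sigma> permutes {..<n}" and j: "j < n"
  shows "vec_mat_mult n x (\<lambda>i j. if j = \<sigma> i then d i else 0) j = x (inv \<sigma> j) * d (inv \<sigma> j)"
proof -
  have "inv \<sigma> j < n" using permutes_in_image[OF permutes_inv[OF \<sigma>]] j by simp
  moreover have "(j = \<sigma> i) \<longleftrightarrow> (i = inv \<sigma> j)" for i
    using permutes_inv_eq[OF \<sigma>] by metis
  ultimately show ?thesis using j
    by (simp add: vec_mat_mult_def if_distrib[of "\<lambda>a. _ * a"] cong: if_cong)
qed

lemma syndrome_vec_mat_mult_monomial:
  assumes \<sigma>: "\<sigma> permutes {..<n}" and F: "\<And>i. i < n \<Longrightarrow> F i = vscale (d i) (G (\<sigma> i))"
  shows "syndrome n G (vec_mat_mult n x (\<lambda>i j. if j = \<sigma> i then d i else 0)) = syndrome n F x"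
proof -
  have "syndrome n G (vec_mat_mult n x (\<lambda>i j. if j = \<sigma> i then d i else 0))
      = (\<Sum>j<n. vscale (x (inv \<sigma> j) * d (inv \<sigma> j)) (G j))"
    unfolding syndrome_def by (rule sum.cong) (simp_all add: vec_mat_mult_monomial[OF \<sigma>])
  also have "\<dots> = (\<Sum>i<n. vscale (x i * d i) (G (\<sigma> i)))"
    using sum.permute[OF \<sigma>, of "\<lambda>j. vscale (x (inv \<sigma> j) * d (inv \<sigma> j)) (G j)"]
    by (simp add: permutes_inverses[OF \<sigma>])
  also have "\<dots> = syndrome n F x"
    unfolding syndrome_def by (rule sum.cong) (simp_all add: F)
  finally show ?thesis .
qed

lemma lin_equiv_syndrome_code_monomial:
  fixes F G :: "nat \<Rightarrow> nat \<Rightarrow> 'a::field"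
  assumes \<sigma>: "\<sigma> permutes {..<n}" and d: "\<And>i. i < n \<Longrightarrow> d i \<noteq> 0"
    and F: "\<And>i. i < n \<Longrightarrow> F i = vscale (d i) (G (\<sigma> i))"
  shows "lin_equiv n (syndrome_code n F) (syndrome_code n G)"
proof -
  define M where "M = (\<lambda>i j. if j = \<sigma> i then d i else (0::'a))"
  have monomial: "monomial_matrix n M"
    unfolding monomial_matrix_def M_def using \<sigma> d by blast
  have syn: "syndrome n G (vec_mat_mult n x M) = syndrome n F x" for x
    unfolding M_def using F by (rule syndrome_vec_mat_mult_monomial[OF \<sigma>])
  have vecs: "vec_mat_mult n x M \<in> vecs n" for x
    by (simp add: vec_mat_mult_def vecs_def)
  have "syndrome_code n G \<subseteq> (\<lambda>x. vec_mat_mult n x M) ` syndrome_code n F"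
  proof
    fix y assume y: "y \<in> syndrome_code n G"
    define x where "x i = (if i < n then y (\<sigma> i) / d i else 0)" for i
    have "vec_mat_mult n x M j = y j" for j
    proof (cases "j < n")
      case True
      have "inv \<sigma> j < n" using permutes_in_image[OF permutes_inv[OF \<sigma>]] True by simp
      then show ?thesis
        using True d by (simp add: M_def vec_mat_mult_monomial[OF \<sigma>] x_def permutes_inverses[OF \<sigma>])
    next
      case False
      then show ?thesis using y by (simp add: vec_mat_mult_def syndrome_code_def vecs_def)
    qed
    then have "y = vec_mat_mult n x M" by auto
    moreover have "x \<in> syndrome_code n F"
      using y syn[of x] \<open>y = vec_mat_mult n x M\<close> by (simp add: syndrome_code_def vecs_def x_def)
    ultimately show "y \<in> (\<lambda>x. vec_mat_mult n x M) ` syndrome_code n F" by blast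
  qed
  moreover have "(\<lambda>x. vec_mat_mult n x M) ` syndrome_code n F \<subseteq> syndrome_code n G"
    using syn vecs by (auto simp: syndrome_code_def)
  ultimately show ?thesis unfolding lin_equiv_def using monomial by blast
qed

subsection \<open>Column systems covering every projective point equally often\<close>

text \<open>Since the columns are nonzero, the pairs counted for s correspond to the columns that are
  nonzero multiples of s.\<close>
definition uniform_columns :: "nat \<Rightarrow> nat \<Rightarrow> nat \<Rightarrow> (nat \<Rightarrow> nat \<Rightarrow> 'a::field) \<Rightarrow> bool" where
  "uniform_columns m n r F \<longleftrightarrow> (\<forall>i<n. F i \<in> vecs m \<and> F i \<noteq> 0) \<and>
     (\<forall>s \<in> vecs m - {0}. card {(i, a). i < n \<and> a \<noteq> 0 \<and> vscale a (F i) = s} = r)"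

lemma uniform_columns_card:
  fixes F :: "nat \<Rightarrow> nat \<Rightarrow> 'a::{field,finite}"
  assumes F: "uniform_columns m n r F"
  shows "n * (card (UNIV :: 'a set) - 1) = (card (UNIV :: 'a set) ^ m - 1) * r"
proof -
  define S where "S s = {(i, a). i < n \<and> a \<noteq> 0 \<and> vscale a (F i) = s}" for s :: "nat \<Rightarrow> 'a"
  have "{..<n} \<times> (UNIV - {0}) = (\<Union>s \<in> vecs m - {0}. S s)"
  proof (intro equalityI subsetI)
    fix p assume "p \<in> {..<n} \<times> (UNIV - {0 :: 'a})"
    then obtain i a where p: "p = (i, a)" "i < n" "a \<noteq> 0" by auto
    then have "vscale a (F i) \<in> vecs m - {0}"
      using F V.subspace_scale[OF subspace_vecs] by (auto simp: uniform_columns_def)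
    then show "p \<in> (\<Union>s \<in> vecs m - {0}. S s)" using p by (auto simp: S_def)
  qed (auto simp: S_def)
  moreover have "finite (S s)" for s
    by (rule finite_subset[of _ "{..<n} \<times> UNIV"]) (auto simp: S_def)
  ultimately have "card ({..<n} \<times> (UNIV - {0 :: 'a})) = (\<Sum>s \<in> vecs m - {0}. card (S s))"
    by (simp only:) (rule card_UN_disjoint, auto simp: finite_vecs S_def)
  also have "\<dots> = (\<Sum>s \<in> vecs m - {0 :: nat \<Rightarrow> 'a}. r)"
    using F by (intro sum.cong) (auto simp: S_def uniform_columns_def)
  finally show ?thesis
    by (simp add: card_cartesian_product card_Diff_singleton card_nonzero_vecs)
qed

lemma permutation_matching_fibres:
  fixes f g :: "nat \<Rightarrow> 'b"
  assumes "\<And>P. card {i. i < n \<and> f i = P} = card {j. j < n \<and> g j = P}"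
  obtains \<sigma> where "\<sigma> permutes {..<n}" "\<And>i. i < n \<Longrightarrow> g (\<sigma> i) = f i"
proof -
  have "\<forall>P. \<exists>h. bij_betw h {i. i < n \<and> f i = P} {j. j < n \<and> g j = P}"
    using assms by (auto intro: finite_same_card_bij)
  then obtain h where h: "\<And>P. bij_betw (h P) {i. i < n \<and> f i = P} {j. j < n \<and> g j = P}"
    by metis
  define \<sigma> where "\<sigma> i = (if i < n then h (f i) i else i)" for i
  have \<sigma>: "\<sigma> i < n \<and> g (\<sigma> i) = f i" if "i < n" for i
    using bij_betwE[OF h[of "f i"]] that by (auto simp: \<sigma>_def)
  have inj: "inj_on \<sigma> {..<n}"
  proof (rule inj_onI)
    fix i i' assume i: "i \<in> {..<n}" "i' \<in> {..<n}" and e: "\<sigma> i = \<sigma> i'"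
    then have "f i = f i'" using \<sigma>[of i] \<sigma>[of i'] by auto
    then have "h (f i) i = h (f i) i'" using e i by (simp add: \<sigma>_def)
    then show "i = i'"
      using i \<open>f i = f i'\<close> inj_onD[OF bij_betw_imp_inj_on[OF h[of "f i"]]] by auto
  qed
  have "\<sigma> ` {..<n} \<subseteq> {..<n}" using \<sigma> by auto
  then have "\<sigma> ` {..<n} = {..<n}" using endo_inj_surj[OF finite_lessThan _ inj] by blast
  then have "\<sigma> permutes {..<n}"
    using inj by (intro bij_imp_permutes) (auto simp: bij_betw_def \<sigma>_def)
  with \<sigma> show thesis by (intro that) auto
qed

definition nonzero_multiples :: "(nat \<Rightarrow> 'a::field) \<Rightarrow> (nat \<Rightarrow> 'a) set" where
  "nonzero_multiples x = (\<lambda>a. vscale a x) ` (UNIV - {0})"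

lemma nonzero_multiples_eq_iff:
  fixes x s :: "nat \<Rightarrow> 'a::field"
  assumes "s \<noteq> 0"
  shows "nonzero_multiples x = nonzero_multiples s \<longleftrightarrow> (\<exists>a. a \<noteq> 0 \<and> vscale a x = s)"
proof
  assume "nonzero_multiples x = nonzero_multiples s"
  moreover have "s \<in> nonzero_multiples s"
    unfolding nonzero_multiples_def by (rule image_eqI[of _ _ 1]) auto
  ultimately have "s \<in> nonzero_multiples x" by simp
  then show "\<exists>a. a \<noteq> 0 \<and> vscale a x = s" by (auto simp: nonzero_multiples_def)
next
  assume "\<exists>a. a \<noteq> 0 \<and> vscale a x = s"
  then obtain a where a: "a \<noteq> 0" "s = vscale a x" by metis
  show "nonzero_multiples x = nonzero_multiples s"
  proof (intro equalityI subsetI)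
    fix y assume "y \<in> nonzero_multiples x"
    then obtain b where "b \<noteq> 0" "y = vscale (b / a) s"
      using a by (auto simp: nonzero_multiples_def)
    then show "y \<in> nonzero_multiples s" using a(1) by (auto simp: nonzero_multiples_def)
  next
    fix y assume "y \<in> nonzero_multiples s"
    then obtain b where "b \<noteq> 0" "y = vscale (b * a) x"
      using a by (auto simp: nonzero_multiples_def)
    then show "y \<in> nonzero_multiples x" using a(1) by (auto simp: nonzero_multiples_def)
  qed
qed

lemma card_nonzero_multiples_fibre:
  fixes F :: "nat \<Rightarrow> nat \<Rightarrow> 'a::field"
  assumes F: "\<And>i. i < n \<Longrightarrow> F i \<noteq> 0" and s: "s \<noteq> 0"
  shows "card {i. i < n \<and> nonzero_multiples (F i) = nonzero_multiples s}
    = card {(i, a). i < n \<and> a \<noteq> 0 \<and> vscale a (F i) = s}"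
proof -
  have "bij_betw fst {(i, a). i < n \<and> a \<noteq> 0 \<and> vscale a (F i) = s}
      {i. i < n \<and> nonzero_multiples (F i) = nonzero_multiples s}"
  proof (rule bij_betwI')
    fix p p' assume "p \<in> {(i, a). i < n \<and> a \<noteq> 0 \<and> vscale a (F i) = s}"
      "p' \<in> {(i, a). i < n \<and> a \<noteq> 0 \<and> vscale a (F i) = s}"
    then show "(fst p = fst p') = (p = p')"
      using F by (cases p, cases p') auto
  qed (use nonzero_multiples_eq_iff[OF s] in auto)
  then show ?thesis by (simp add: bij_betw_same_card)
qed

lemma card_nonzero_multiples_fibre_uniform:
  fixes H :: "nat \<Rightarrow> nat \<Rightarrow> 'a::field"
  assumes H: "uniform_columns m n r H"
  shows "card {i. i < n \<and> nonzero_multiples (H i) = P}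
    = (if \<exists>s \<in> vecs m - {0}. P = nonzero_multiples s then r else 0)"
proof (cases "\<exists>s \<in> vecs m - {0}. P = nonzero_multiples s")
  case True
  then obtain s where s: "s \<in> vecs m - {0}" "P = nonzero_multiples s" by blast
  have "card {i. i < n \<and> nonzero_multiples (H i) = P}
      = card {(i, a). i < n \<and> a \<noteq> 0 \<and> vscale a (H i) = s}"
    unfolding s(2) by (rule card_nonzero_multiples_fibre) (use H s in \<open>auto simp: uniform_columns_def\<close>)
  then show ?thesis using H s True by (simp add: uniform_columns_def)
next
  case False
  then have "{i. i < n \<and> nonzero_multiples (H i) = P} = {}"
    using H by (auto simp: uniform_columns_def)
  then show ?thesis using False by simp
qed

lemma lin_equiv_uniform_columns:
  fixes F G :: "nat \<Rightarrow> nat \<Rightarrow> 'a::field"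
  assumes F: "uniform_columns m n r F" and G: "uniform_columns m n r G"
  shows "lin_equiv n (syndrome_code n F) (syndrome_code n G)"
proof -
  \<comment> \<open>Match the columns projectively by a permutation; the scalars relating matched columns form
    the monomial matrix.\<close>
  have "card {i. i < n \<and> nonzero_multiples (F i) = P}
      = card {j. j < n \<and> nonzero_multiples (G j) = P}" for P
    by (simp only: card_nonzero_multiples_fibre_uniform[OF F] card_nonzero_multiples_fibre_uniform[OF G])
  then obtain \<sigma> where \<sigma>: "\<sigma> permutes {..<n}"
    "\<And>i. i < n \<Longrightarrow> nonzero_multiples (G (\<sigma> i)) = nonzero_multiples (F i)"
    by (rule permutation_matching_fibres) blast
  have "\<exists>d. d \<noteq> 0 \<and> vscale d (G (\<sigma> i)) = F i" if i: "i < n" for i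
  proof -
    have "\<sigma> i < n" using permutes_in_image[OF \<sigma>(1)] i by simp
    then show ?thesis
      using nonzero_multiples_eq_iff[of "F i" "G (\<sigma> i)"] \<sigma>(2)[OF i] F i
      by (auto simp: uniform_columns_def)
  qed
  then obtain d where d: "\<And>i. i < n \<Longrightarrow> d i \<noteq> 0 \<and> vscale (d i) (G (\<sigma> i)) = F i"
    by metis
  show ?thesis
    by (rule lin_equiv_syndrome_code_monomial[OF \<sigma>(1), of d]) (use d in auto)
qed

lemma bij_betw_replicated_multiples:
  fixes H G :: "nat \<Rightarrow> nat \<Rightarrow> 'a::field"
  assumes c: "c \<noteq> 0" and G: "\<And>j. j < na * nb \<Longrightarrow> G j = vscale c (H (j mod nb))"
  shows "bij_betw (\<lambda>(t, b, a). (t * nb + b, a / c))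
    ({..<na} \<times> {(b, a). b < nb \<and> a \<noteq> 0 \<and> vscale a (H b) = s})
    {(j, a). j < na * nb \<and> a \<noteq> 0 \<and> vscale a (G j) = s}"
    (is "bij_betw _ ({..<na} \<times> ?P) ?Q")
proof (rule bij_betwI[where g = "\<lambda>(j, a). (j div nb, j mod nb, a * c)"])
  show "(\<lambda>(t, b, a). (t * nb + b, a / c)) \<in> {..<na} \<times> ?P \<rightarrow> ?Q"
  proof
    fix p assume "p \<in> {..<na} \<times> ?P"
    then obtain t b a where p: "p = (t, b, a)" "t < na" "b < nb" "a \<noteq> 0" "vscale a (H b) = s"
      by auto
    have "t * nb + b < Suc t * nb" using p(3) by simp
    also have "\<dots> \<le> na * nb" using p(2) by (intro mult_right_mono) auto
    finally have j: "t * nb + b < na * nb" .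
    then have "vscale (a / c) (G (t * nb + b)) = s"
      using G[OF j] p(3,5) c by simp
    then show "(\<lambda>(t, b, a). (t * nb + b, a / c)) p \<in> ?Q" using p j c by simp
  qed
  show "(\<lambda>(j, a). (j div nb, j mod nb, a * c)) \<in> ?Q \<rightarrow> {..<na} \<times> ?P"
  proof
    fix q assume "q \<in> ?Q"
    then obtain j a where q: "q = (j, a)" "j < na * nb" "a \<noteq> 0" "vscale a (G j) = s"
      by auto
    then have "j mod nb < nb" "j div nb < na"
      by (cases "nb = 0", simp_all) (simp add: less_mult_imp_div_less)
    moreover have "vscale (a * c) (H (j mod nb)) = s" using q G by simp
    ultimately show "(\<lambda>(j, a). (j div nb, j mod nb, a * c)) q \<in> {..<na} \<times> ?P"
      using q c by simp
  qed
qed (use c in auto)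

lemma uniform_columns_replicate:
  fixes H G :: "nat \<Rightarrow> nat \<Rightarrow> 'a::field"
  assumes H: "uniform_columns m nb r H" and c: "c \<noteq> 0"
    and G: "\<And>j. j < na * nb \<Longrightarrow> G j = vscale c (H (j mod nb))"
  shows "uniform_columns m (na * nb) (na * r) G"
proof -
  have "G j \<in> vecs m \<and> G j \<noteq> 0" if j: "j < na * nb" for j
  proof -
    have "j mod nb < nb" using j by (cases "nb = 0") simp_all
    then show ?thesis using H c G[OF j] by (auto simp: uniform_columns_def vscale_in_vecs)
  qed
  moreover have "card {(j, a). j < na * nb \<and> a \<noteq> 0 \<and> vscale a (G j) = s} = na * r"
    if s: "s \<in> vecs m - {0}" for s
    using bij_betw_same_card[OF bij_betw_replicated_multiples[where H = H and G = G and s = s, OF c G]] H s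
    by (simp add: card_cartesian_product uniform_columns_def)
  ultimately show ?thesis by (simp add: uniform_columns_def)
qed

lemma uniform_columns_unit_vec: "uniform_columns 1 1 1 (\<lambda>_. unit_vec 0 :: nat \<Rightarrow> 'a::field)"
proof -
  have "{(i, a). i < 1 \<and> a \<noteq> 0 \<and> vscale a (unit_vec 0) = s} = {(0 :: nat, s 0)}"
    if s: "s \<in> vecs 1 - {0 :: nat \<Rightarrow> 'a}" for s
  proof -
    have s0: "s j = 0" if "j \<noteq> 0" for j using s that by (simp add: vecs_def)
    have "vscale a (unit_vec 0) = s \<longleftrightarrow> a = s 0" for a
    proof
      show "vscale a (unit_vec 0) = s \<Longrightarrow> a = s 0" by (auto simp: unit_vec_def vscale_apply)
      show "a = s 0 \<Longrightarrow> vscale a (unit_vec 0) = s"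
        using s0 by (auto simp: fun_eq_iff unit_vec_def vscale_apply)
    qed
    moreover have "s 0 \<noteq> 0" using s s0 by (metis DiffE fun_eq_iff insertI1 zero_fun_def)
    ultimately show ?thesis by auto
  qed
  then show ?thesis
    by (simp add: uniform_columns_def unit_vec_in_vecs) (simp add: unit_vec_def fun_eq_iff)
qed

definition column :: "nat \<Rightarrow> (nat \<Rightarrow> nat \<Rightarrow> 'a::zero) \<Rightarrow> nat \<Rightarrow> nat \<Rightarrow> 'a" where
  "column m K j = (\<lambda>i. if i < m then K i j else 0)"

lemma column_in_vecs: "column m K j \<in> vecs m"
  by (simp add: column_def vecs_def)

lemma ker_code_eq_syndrome_code: "ker_code m n K = syndrome_code n (column m K)"
proof -
  have "syndrome n (column m K) x r = (if r < m then (\<Sum>j<n. K r j * x j) else 0)" for x r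
    by (simp add: syndrome_def sum_fun_apply vscale_apply column_def mult.commute)
  then show ?thesis
    by (auto simp: ker_code_def syndrome_code_def fun_eq_iff)
qed

lemma column_single_row: "A 0 j = c \<Longrightarrow> column 1 A j = vscale c (unit_vec 0)"
  by (auto simp: fun_eq_iff column_def unit_vec_def vscale_apply)

lemma column_kron:
  assumes "j < na * nb" "\<forall>j<na. A 0 j = c"
  shows "column m (kron m nb A B) j = vscale c (column m B (j mod nb))"
proof -
  have "j div nb < na" using assms(1) by (simp add: less_mult_imp_div_less)
  then show ?thesis using assms(2) by (auto simp: fun_eq_iff column_def kron_def vscale_apply)
qed

subsection \<open>Hamming codes\<close>

lemma pred_dvd_power_pred: "(q - 1) dvd (q ^ m - 1 :: nat)"
proof (cases "q = 0")
  case False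
  have "int q ^ m - 1 = (int q - 1) * (\<Sum>i<m. int q ^ i)" by (rule power_diff_1_eq)
  then have "int (q - 1) dvd int (q ^ m - 1)"
    using False by simp
  then show ?thesis by (simp only: of_nat_dvd_iff)
qed (cases m; simp)

lemma hamming_length_mult: "hamming_length q m * (q - 1) = q ^ m - 1"
  unfolding hamming_length_def using pred_dvd_power_pred[of q m] by simp

lemma hamming_pcm_column_nonzero:
  fixes B :: "nat \<Rightarrow> nat \<Rightarrow> 'a::{field,finite}"
  assumes "hamming_pcm m B" "b < hamming_length (card (UNIV :: 'a set)) m"
  shows "column m B b \<noteq> 0"
  using assms unfolding hamming_pcm_def column_def by (auto simp: fun_eq_iff)

lemma hamming_pcm_multiple_unique:
  fixes B :: "nat \<Rightarrow> nat \<Rightarrow> 'a::{field,finite}"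
  assumes H: "hamming_pcm m B"
    and b: "b < hamming_length (card (UNIV :: 'a set)) m" "b' < hamming_length (card (UNIV :: 'a set)) m"
    and a: "a \<noteq> 0" and e: "vscale a (column m B b) = vscale a' (column m B b')"
  shows "b = b' \<and> a = a'"
proof -
  have a': "a' \<noteq> 0"
  proof
    assume "a' = 0"
    then show False using e a hamming_pcm_column_nonzero[OF H b(1)] by simp
  qed
  have "b = b'"
  proof (rule ccontr)
    assume "b \<noteq> b'"
    have "column m B b' = vscale (a / a') (column m B b)"
      using e a' by (metis V.scale_left_imp_eq V.scale_scale nonzero_mult_div_cancel_left
          times_divide_eq_right)
    then have "\<forall>i<m. B i b' = a / a' * B i b"
      by (metis column_def vscale_apply)
    then show False using H b \<open>b \<noteq> b'\<close> unfolding hamming_pcm_def by blast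
  qed
  then show ?thesis using e hamming_pcm_column_nonzero[OF H b(1)] by simp
qed

lemma hamming_pcm_uniform_columns:
  fixes B :: "nat \<Rightarrow> nat \<Rightarrow> 'a::{field,finite}"
  assumes H: "hamming_pcm m B"
  shows "uniform_columns m (hamming_length (card (UNIV :: 'a set)) m) 1 (column m B)"
proof -
  let ?q = "card (UNIV :: 'a set)"
  let ?X = "{..<hamming_length ?q m} \<times> (UNIV - {0::'a})"
  let ?f = "\<lambda>(b, a). vscale a (column m B b)"
  have inj: "inj_on ?f ?X"
    by (rule inj_onI) (auto dest: hamming_pcm_multiple_unique[OF H])
  have sub: "?f ` ?X \<subseteq> vecs m - {0}"
    using hamming_pcm_column_nonzero[OF H] by (auto intro: vscale_in_vecs column_in_vecs)
  have "card (?f ` ?X) = card (vecs m - {0 :: nat \<Rightarrow> 'a})"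
    using card_image[OF inj] hamming_length_mult[of ?q m]
    by (simp add: card_cartesian_product card_Diff_singleton card_nonzero_vecs)
  with sub have onto: "?f ` ?X = vecs m - {0}"
    by (intro card_subset_eq) (simp_all add: finite_vecs)
  have "card {(b, a). b < hamming_length ?q m \<and> a \<noteq> 0 \<and> vscale a (column m B b) = s} = 1"
    if s: "s \<in> vecs m - {0}" for s
  proof -
    from s onto have "s \<in> ?f ` ?X" by simp
    then obtain p where p: "p \<in> ?X" "s = ?f p" by (rule imageE)
    have "{(b, a). b < hamming_length ?q m \<and> a \<noteq> 0 \<and> vscale a (column m B b) = s} = {p}"
    proof (intro equalityI subsetI)
      fix p' assume "p' \<in> {(b, a). b < hamming_length ?q m \<and> a \<noteq> 0 \<and> vscale a (column m B b) = s}"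
      then have "p' \<in> ?X" "?f p' = ?f p" using p by auto
      then show "p' \<in> {p}" using inj_onD[OF inj _ _ p(1)] by blast
    qed (use p in auto)
    then show ?thesis by simp
  qed
  then show ?thesis
    using hamming_pcm_column_nonzero[OF H] by (simp add: uniform_columns_def column_in_vecs)
qed

definition lead_index :: "(nat \<Rightarrow> 'a::zero) \<Rightarrow> nat" where
  "lead_index x = (LEAST i. x i \<noteq> 0)"

lemma lead_index_nonzero: "x \<noteq> 0 \<Longrightarrow> x (lead_index x) \<noteq> 0"
  unfolding lead_index_def by (rule LeastI_ex) (auto simp: fun_eq_iff)

lemma lead_index_vscale: "(a::'a::field) \<noteq> 0 \<Longrightarrow> lead_index (vscale a x) = lead_index x"
  unfolding lead_index_def by (simp add: vscale_apply)

text \<open>One representative of each projective point; they are the columns of a Hamming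
  parity-check matrix.\<close>
definition normalized_vecs :: "nat \<Rightarrow> (nat \<Rightarrow> 'a::field) set" where
  "normalized_vecs m = {x \<in> vecs m. x \<noteq> 0 \<and> x (lead_index x) = 1}"

lemma normalized_vecs_scale_eq:
  assumes "x \<in> normalized_vecs m" "vscale a x = vscale a' x'" "a \<noteq> 0" "x' \<in> normalized_vecs m" "a' \<noteq> 0"
  shows "a = a' \<and> x = x'"
proof -
  have "lead_index x = lead_index x'"
    using lead_index_vscale[of a x] lead_index_vscale[of a' x'] assms(2,3,5) by simp
  then have "a = a'"
    using fun_cong[OF assms(2), of "lead_index x"] assms(1,4) by (simp add: normalized_vecs_def vscale_apply)
  then show ?thesis using assms(2,3) by simp
qed

lemma card_normalized_vecs:
  "card (normalized_vecs m :: (nat \<Rightarrow> 'a::{field,finite}) set) = hamming_length (card (UNIV :: 'a set)) m"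
proof -
  let ?q = "card (UNIV :: 'a set)"
  let ?R = "normalized_vecs m :: (nat \<Rightarrow> 'a) set"
  let ?f = "\<lambda>(x, a). vscale a x"
  have "bij_betw ?f (?R \<times> (UNIV - {0})) (vecs m - {0})"
  proof (rule bij_betw_imageI)
    show "inj_on ?f (?R \<times> (UNIV - {0}))"
      by (rule inj_onI) (auto dest: normalized_vecs_scale_eq)
    show "?f ` (?R \<times> (UNIV - {0})) = vecs m - {0}"
    proof (intro equalityI subsetI)
      fix s :: "nat \<Rightarrow> 'a" assume s: "s \<in> vecs m - {0}"
      let ?c = "s (lead_index s)"
      have c: "?c \<noteq> 0" using s lead_index_nonzero by auto
      have "vscale (1 / ?c) s \<in> ?R"
        using s c lead_index_vscale[of "1 / ?c" s]
        by (auto simp: normalized_vecs_def vscale_in_vecs vscale_apply)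
      moreover have "s = vscale ?c (vscale (1 / ?c) s)" using c by simp
      ultimately show "s \<in> ?f ` (?R \<times> (UNIV - {0}))" using c by force
    qed (auto simp: normalized_vecs_def vscale_in_vecs)
  qed
  then have "card (?R \<times> (UNIV - {0 :: 'a})) = card (vecs m - {0 :: nat \<Rightarrow> 'a})"
    by (rule bij_betw_same_card)
  then have "card ?R * (?q - 1) = ?q ^ m - 1"
    by (simp add: card_cartesian_product card_Diff_singleton card_nonzero_vecs)
  moreover have "?q - 1 \<noteq> 0" using card_UNIV_field_ge_2[where 'a='a] by simp
  ultimately show ?thesis
    unfolding hamming_length_def by (metis nonzero_mult_div_cancel_right)
qed

lemma hamming_pcm_exists:
  assumes m: "2 \<le> m"
  shows "\<exists>B :: nat \<Rightarrow> nat \<Rightarrow> 'a::{field,finite}. hamming_pcm m B"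
proof -
  let ?nb = "hamming_length (card (UNIV :: 'a set)) m"
  let ?R = "normalized_vecs m :: (nat \<Rightarrow> 'a) set"
  have "finite ?R"
    by (rule finite_subset[OF _ finite_vecs]) (auto simp: normalized_vecs_def)
  then obtain r where r: "bij_betw r {..<?nb} ?R"
    using ex_bij_betw_nat_finite[of ?R] card_normalized_vecs[where 'a='a] by (metis atLeast0LessThan)
  then have rR: "r j \<in> vecs m" "r j \<noteq> 0" "r j (lead_index (r j)) = 1" if "j < ?nb" for j
    using that by (auto simp: bij_betw_def normalized_vecs_def)
  define B where "B i j = r j i" for i j
  have "\<exists>i<m. B i j \<noteq> 0" if j: "j < ?nb" for j
    using rR[OF j] by (auto simp: B_def vecs_def fun_eq_iff) (meson not_less)
  moreover have "\<not> (\<exists>a. \<forall>i<m. B i j' = a * B i j)"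
    if j: "j < ?nb" "j' < ?nb" "j \<noteq> j'" for j j'
  proof
    assume "\<exists>a. \<forall>i<m. B i j' = a * B i j"
    then obtain a where a: "\<forall>i<m. r j' i = a * r j i" by (auto simp: B_def)
    have "r j' i = a * r j i" for i
      using a rR(1)[OF j(1)] rR(1)[OF j(2)] by (cases "i < m") (auto simp: vecs_def)
    then have e: "vscale 1 (r j') = vscale a (r j)" by (simp add: fun_eq_iff vscale_apply)
    moreover have "a \<noteq> 0" using e rR(2)[OF j(2)] by auto
    moreover have "r j \<in> ?R" "r j' \<in> ?R" using bij_betwE[OF r] j by auto
    ultimately have "r j' = r j"
      using normalized_vecs_scale_eq[of "r j'" m 1 a "r j"] by simp
    then show False using j bij_betw_imp_inj_on[OF r] by (auto dest: inj_onD)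
  qed
  ultimately have "hamming_pcm m B" using m by (simp add: hamming_pcm_def)
  then show ?thesis by blast
qed

subsection \<open>Codes of minimum distance 2 with covering radius 1\<close>

lemma covering_radius_vecs: "covering_radius n (vecs n :: (nat \<Rightarrow> 'a::{zero,finite}) set) = 0"
proof -
  have d0: "dist_to_code n (vecs n) v = 0" if "v \<in> vecs n" for v :: "nat \<Rightarrow> 'a"
  proof -
    have "hdist n v v = 0" by (simp add: hdist_def)
    then have "0 \<in> (\<lambda>c. hdist n v c) ` vecs n" using that by (metis image_eqI)
    then show ?thesis
      unfolding dist_to_code_def by (meson Min_le finite_imageI finite_vecs le_zero_eq)
  qed
  moreover have "(0 :: nat \<Rightarrow> 'a) \<in> vecs n" by (simp add: vecs_def)
  ultimately have "(\<lambda>v. dist_to_code n (vecs n) v) ` (vecs n :: (nat \<Rightarrow> 'a) set) = {0}" by force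
  then show ?thesis by (simp add: covering_radius_def)
qed

lemma unit_vec_notin_code:
  fixes C :: "(nat \<Rightarrow> 'a::field) set"
  assumes lin: "linear_code n C" and md: "min_dist n C 2" and i: "i < n"
  shows "unit_vec i \<notin> C"
proof
  assume "unit_vec i \<in> C"
  moreover have "(\<lambda>_. 0) \<in> C" using lin by (simp add: linear_code_def)
  moreover have "unit_vec i \<noteq> (\<lambda>_. 0 :: 'a)" by (auto simp: unit_vec_def fun_eq_iff)
  ultimately have "2 \<le> hdist n (unit_vec i) (\<lambda>_. 0 :: 'a)"
    using md unfolding min_dist_def by blast
  moreover have "{j. j < n \<and> unit_vec i j \<noteq> (0::'a)} = {i}" using i by (auto simp: unit_vec_def)
  then have "hdist n (unit_vec i) (\<lambda>_. 0 :: 'a) = 1" by (simp add: hdist_def)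
  ultimately show False by simp
qed

lemma hdist_eq_1_iff:
  fixes v c :: "nat \<Rightarrow> 'a::field"
  assumes v: "v \<in> vecs n" and c: "c \<in> vecs n"
  shows "hdist n v c = 1 \<longleftrightarrow> (\<exists>i<n. \<exists>a. a \<noteq> 0 \<and> c = v - vscale a (unit_vec i))"
proof
  assume "hdist n v c = 1"
  then obtain i where i: "{j. j < n \<and> v j \<noteq> c j} = {i}"
    unfolding hdist_def by (rule card_1_singletonE)
  then have i': "i < n" "v i \<noteq> c i" by (blast, blast)
  define a where "a = v i - c i"
  have "c j = v j - a * unit_vec i j" for j
  proof (cases "j = i")
    case False
    then have "v j = c j" using i v c by (cases "j < n") (auto simp: vecs_def set_eq_iff)
    then show ?thesis using False by (simp add: unit_vec_def)
  qed (simp add: unit_vec_def a_def)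
  then have "c = v - vscale a (unit_vec i)" by (simp add: fun_eq_iff vscale_apply)
  moreover have "a \<noteq> 0" using i' by (simp add: a_def)
  ultimately show "\<exists>i<n. \<exists>a. a \<noteq> 0 \<and> c = v - vscale a (unit_vec i)" using i' by blast
next
  assume "\<exists>i<n. \<exists>a. a \<noteq> 0 \<and> c = v - vscale a (unit_vec i)"
  then obtain i a where "i < n" "a \<noteq> 0" "c = v - vscale a (unit_vec i)" by blast
  then have "{j. j < n \<and> v j \<noteq> c j} = {i}" by (auto simp: unit_vec_def vscale_apply)
  then show "hdist n v c = 1" by (simp add: hdist_def)
qed

lemma inj_on_diff_scaled_unit_vec:
  "inj_on (\<lambda>(i, a). v - vscale a (unit_vec i)) (UNIV \<times> (UNIV - {0 :: 'a::field}))"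
proof (rule inj_onI)
  fix p p' :: "nat \<times> 'a"
  assume p: "p \<in> UNIV \<times> (UNIV - {0})"
    and e: "(\<lambda>(i, a). v - vscale a (unit_vec i)) p = (\<lambda>(i, a). v - vscale a (unit_vec i)) p'"
  obtain i a i' a' where pp: "p = (i, a)" "p' = (i', a')" by (cases p, cases p')
  with e have "vscale a (unit_vec i) = vscale a' (unit_vec i')" by simp
  from fun_cong[OF this, of i] have "a = a' * unit_vec i' i"
    by (simp add: unit_vec_def vscale_apply)
  moreover from this have "i = i'" using p pp by (simp add: unit_vec_def split: if_splits)
  ultimately show "p = p'" using pp by (simp add: unit_vec_def)
qed

lemma card_syndrome_code_neighbours:
  fixes F :: "nat \<Rightarrow> nat \<Rightarrow> 'a::field"
  assumes v: "v \<in> vecs n"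
  shows "card {c \<in> syndrome_code n F. hdist n v c = 1}
    = card {(i, a). i < n \<and> a \<noteq> 0 \<and> vscale a (F i) = syndrome n F v}"
proof -
  let ?P = "{(i, a). i < n \<and> a \<noteq> 0 \<and> vscale a (F i) = syndrome n F v}"
  let ?\<phi> = "\<lambda>(i, a). v - vscale a (unit_vec i)"
  have syn: "syndrome n F (v - vscale a (unit_vec i)) = syndrome n F v - vscale a (F i)"
    if "i < n" for i a
    unfolding VP.linear_diff[OF linear_syndrome] VP.linear_scale[OF linear_syndrome]
      syndrome_unit_vec[OF that] ..
  have vecs: "v - vscale a (unit_vec i) \<in> vecs n" if "i < n" for i a
    using v unit_vec_in_vecs[OF that] by (auto simp: vecs_def vscale_apply)
  have inj: "inj_on ?\<phi> ?P"
    by (rule inj_on_subset[OF inj_on_diff_scaled_unit_vec]) auto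
  have image: "?\<phi> ` ?P = {c \<in> syndrome_code n F. hdist n v c = 1}"
  proof (intro equalityI subsetI)
    fix c assume "c \<in> ?\<phi> ` ?P"
    then obtain i a where ia: "i < n" "a \<noteq> 0" "vscale a (F i) = syndrome n F v"
      and c: "c = v - vscale a (unit_vec i)" by auto
    have "hdist n v c = 1"
      using hdist_eq_1_iff[OF v vecs[OF ia(1), of a]] ia(1,2) unfolding c by blast
    moreover have "syndrome n F c = 0" unfolding c syn[OF ia(1)] ia(3) by simp
    ultimately show "c \<in> {c \<in> syndrome_code n F. hdist n v c = 1}"
      using vecs[OF ia(1), of a] unfolding c by (simp add: syndrome_code_def)
  next
    fix c assume "c \<in> {c \<in> syndrome_code n F. hdist n v c = 1}"
    then have c: "c \<in> vecs n" "syndrome n F c = 0" "hdist n v c = 1"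
      by (simp_all add: syndrome_code_def)
    obtain i a where ia: "i < n" "a \<noteq> 0" "c = v - vscale a (unit_vec i)"
      using hdist_eq_1_iff[OF v c(1)] c(3) by blast
    have "vscale a (F i) = syndrome n F v" using c(2) syn[OF ia(1)] unfolding ia(3) by simp
    with ia show "c \<in> ?\<phi> ` ?P" by (intro image_eqI[of _ _ "(i, a)"]) simp_all
  qed
  show ?thesis using card_image[OF inj] unfolding image by simp
qed

lemma linear_code_uniform_columns:
  fixes C :: "(nat \<Rightarrow> 'a::{field,finite}) set"
  assumes lin: "linear_code n C" and dim: "code_dim C k" and md: "min_dist n C 2"
    and rho: "covering_radius n C = 1"
    and na: "\<forall>v \<in> vecs n - C. card {c\<in>C. hdist n v c = 1} = na"
  obtains F where "k < n" "C = syndrome_code n F" "uniform_columns (n - k) n na F"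
proof -
  let ?q = "card (UNIV :: 'a set)"
  have Cv: "C \<subseteq> vecs n" using lin by (simp add: linear_code_def)
  have "?q ^ k \<le> ?q ^ n"
    using card_mono[OF finite_vecs Cv] dim by (simp add: code_dim_def card_vecs)
  then have "k \<le> n" using card_UNIV_field_ge_2[where 'a='a] by simp
  moreover have "k \<noteq> n"
  proof
    assume "k = n"
    then have "card C = card (vecs n :: (nat \<Rightarrow> 'a) set)" using dim by (simp add: code_dim_def card_vecs)
    then have "C = vecs n" using card_subset_eq[OF finite_vecs Cv] by simp
    then show False using rho covering_radius_vecs[where 'a='a] by simp
  qed
  ultimately have k: "k < n" by simp
  obtain F where F: "\<And>i. i < n \<Longrightarrow> F i \<in> vecs (n - k)" and C: "C = syndrome_code n F"
    and onto: "syndrome n F ` vecs n = vecs (n - k)"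
    using linear_code_eq_syndrome_code[OF lin dim] by blast
  have "F i \<noteq> 0" if "i < n" for i
    using unit_vec_notin_code[OF lin md that]
    by (simp add: C syndrome_code_def syndrome_unit_vec[OF that] unit_vec_in_vecs[OF that])
  moreover have "card {(i, a). i < n \<and> a \<noteq> 0 \<and> vscale a (F i) = s} = na"
    if s: "s \<in> vecs (n - k) - {0}" for s
  proof -
    from s onto have "s \<in> syndrome n F ` vecs n" by simp
    then obtain v where v: "syndrome n F v = s" "v \<in> vecs n" by (rule imageE) simp
    then have "v \<notin> C" using s by (simp add: C syndrome_code_def)
    then show ?thesis using na v card_syndrome_code_neighbours[OF v(2), of F] by (simp add: C)
  qed
  ultimately have "uniform_columns (n - k) n na F" using F by (simp add: uniform_columns_def)
  with k C show thesis by (rule that)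
qed

lemma generator_matrix_rep_code:
  fixes A :: "nat \<Rightarrow> nat \<Rightarrow> 'a::{field,finite}"
  assumes A: "generator_matrix 1 na A (rep_code na)"
  obtains c where "c \<noteq> 0" "\<forall>j<na. A 0 j = c" "0 < na"
proof -
  have rep: "row_space 1 na A = rep_code na"
    and card: "card (rep_code na :: (nat \<Rightarrow> 'a) set) = card (UNIV :: 'a set)"
    using A by (simp_all add: generator_matrix_def)
  have "(\<lambda>j. if j < na then A 0 j else 0) \<in> row_space 1 na A"
    unfolding row_space_def by (rule CollectI, rule exI[of _ "\<lambda>_. 1"]) (simp add: fun_eq_iff)
  then have "(\<lambda>j. if j < na then A 0 j else 0) \<in> rep_code na" unfolding rep .
  then obtain c where c: "\<forall>j<na. A 0 j = c" by (auto simp: rep_code_def)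
  have "c \<noteq> 0 \<and> 0 < na"
  proof (rule ccontr)
    assume degenerate: "\<not> (c \<noteq> 0 \<and> 0 < na)"
    have "row_space 1 na A \<subseteq> {0}"
    proof
      fix x assume "x \<in> row_space 1 na A"
      then obtain u :: "nat \<Rightarrow> 'a" where "x = (\<lambda>j. if j < na then (\<Sum>r<1. u r * A r j) else 0)"
        unfolding row_space_def by blast
      then show "x \<in> {0}" using c degenerate by (auto simp: fun_eq_iff)
    qed
    then have "card (rep_code na :: (nat \<Rightarrow> 'a) set) \<le> 1"
      using card_mono[of "{0}" "rep_code na"] rep by simp
    then show False using card card_UNIV_field_ge_2[where 'a='a] by simp
  qed
  then show thesis using c that by blast
qed

lemma lin_equiv_repetition_pcm:
  fixes F A :: "nat \<Rightarrow> nat \<Rightarrow> 'a::{field,finite}"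
  assumes F: "uniform_columns 1 n r F" and c: "c \<noteq> 0" "\<forall>j<r. A 0 j = c"
  shows "r = n \<and> lin_equiv n (syndrome_code n F) (ker_code 1 n A)"
proof -
  have "n * (card (UNIV :: 'a set) - 1) = (card (UNIV :: 'a set) ^ 1 - 1) * r"
    by (rule uniform_columns_card[OF F])
  moreover have "card (UNIV :: 'a set) - 1 \<noteq> 0" using card_UNIV_field_ge_2[where 'a='a] by simp
  ultimately have r: "r = n" by (simp add: mult.commute)
  have "uniform_columns 1 (r * 1) (r * 1) (column 1 A)"
    by (rule uniform_columns_replicate[OF uniform_columns_unit_vec c(1)])
      (rule column_single_row, simp add: c(2))
  then show ?thesis
    using lin_equiv_uniform_columns[OF F] r by (simp add: ker_code_eq_syndrome_code)
qed

lemma lin_equiv_kron_hamming_pcm: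
  fixes F A :: "nat \<Rightarrow> nat \<Rightarrow> 'a::{field,finite}"
  assumes F: "uniform_columns m n r F" and m: "2 \<le> m" and r: "0 < r"
    and c: "c \<noteq> 0" "\<forall>j<r. A 0 j = c"
  shows "r dvd n \<and> (\<exists>m'. hamming_length (card (UNIV :: 'a set)) m' = n div r
    \<and> (\<exists>B :: nat \<Rightarrow> nat \<Rightarrow> 'a. hamming_pcm m' B)
    \<and> (\<forall>B. hamming_pcm m' B \<longrightarrow> lin_equiv n (syndrome_code n F) (ker_code m' n (kron m' (n div r) A B))))"
proof -
  let ?q = "card (UNIV :: 'a set)"
  let ?nb = "hamming_length ?q m"
  have "?nb * (?q - 1) = ?q ^ m - 1" by (rule hamming_length_mult)
  with uniform_columns_card[OF F] have "n * (?q - 1) = (r * ?nb) * (?q - 1)" by (simp add: ac_simps)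
  moreover have "?q - 1 \<noteq> 0" using card_UNIV_field_ge_2[where 'a='a] by simp
  ultimately have n: "n = r * ?nb" by simp
  have "n div r = (r * ?nb) div r" using n by (rule arg_cong)
  then have div: "?nb = n div r" using r by simp
  have "lin_equiv n (syndrome_code n F) (ker_code m n (kron m (n div r) A B))"
    if H: "hamming_pcm m B" for B
  proof -
    have "uniform_columns m (r * ?nb) (r * 1) (column m (kron m ?nb A B))"
      by (rule uniform_columns_replicate[OF hamming_pcm_uniform_columns[OF H] c(1)])
        (simp add: column_kron c(2))
    then show ?thesis
      using lin_equiv_uniform_columns[OF F] unfolding n[symmetric] div[symmetric] mult_1_right
      by (simp add: ker_code_eq_syndrome_code)
  qed
  moreover have "r dvd n" using n by (rule dvdI)
  ultimately show ?thesis using div hamming_pcm_exists[OF m] by blast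
qed

theorem proposition3p11:
  fixes C :: "(nat \<Rightarrow> 'a::{field,finite}) set"
    and n k na :: nat
    and A :: "nat \<Rightarrow> nat \<Rightarrow> 'a"
  assumes lin: "linear_code n C"
    and dim: "code_dim C k"
    and md: "min_dist n C 2"
    and cr: "completely_regular n C"
    and rho: "covering_radius n C = 1"
    and na: "\<forall>v \<in> vecs n - C. card {c\<in>C. hdist n v c = 1} = na"
    and A: "generator_matrix 1 na A (rep_code na)"
  shows "(k = n - 1 \<longrightarrow> na = n \<and> lin_equiv n C (ker_code 1 n A))
       \<and> (k < n - 1 \<longrightarrow> na dvd n \<and>
            (\<exists>m. hamming_length (card (UNIV :: 'a set)) m = n div na
               \<and> (\<exists>B :: nat \<Rightarrow> nat \<Rightarrow> 'a. hamming_pcm m B)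
               \<and> (\<forall>B. hamming_pcm m B \<longrightarrow>
                     lin_equiv n C (ker_code m n (kron m (n div na) A B)))))"
proof -
  obtain F where k: "k < n" and C: "C = syndrome_code n F" and F: "uniform_columns (n - k) n na F"
    by (rule linear_code_uniform_columns[OF lin dim md rho na])
  obtain c where c: "c \<noteq> 0" "\<forall>j<na. A 0 j = c" and na_pos: "0 < na"
    by (rule generator_matrix_rep_code[OF A])
  have "na = n \<and> lin_equiv n C (ker_code 1 n A)" if "k = n - 1"
  proof -
    from that F k have "uniform_columns 1 n na F" by simp
    from this c show ?thesis unfolding C by (rule lin_equiv_repetition_pcm)
  qed
  moreover have "na dvd n \<and> (\<exists>m. hamming_length (card (UNIV :: 'a set)) m = n div na
      \<and> (\<exists>B :: nat \<Rightarrow> nat \<Rightarrow> 'a. hamming_pcm m B)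
      \<and> (\<forall>B. hamming_pcm m B \<longrightarrow> lin_equiv n C (ker_code m n (kron m (n div na) A B))))"
    if "k < n - 1"
  proof -
    from that have "2 \<le> n - k" by simp
    from F this na_pos c show ?thesis unfolding C by (rule lin_equiv_kron_hamming_pcm)
  qed
  ultimately show ?thesis by blast
qed

end
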